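(* Let $r\in\mathbb{Q}\cap(0,1)$ with numerator $\mathsf{n}(r)\ge 2$ (in lowest terms), let $S_r$ be the additive submonoid of $\mathbb{R}$ generated by $\{r^n : n\in\mathbb{N}_0\}$, and let $E(S_r)$ be the additive submonoid of $\mathbb{R}$ generated by $\{e^s : s\in S_r\}$. Then $E(S_r)$ is a positive semiring that is atomic but does not satisfy ACCP.
   Context: A positive semiring is a subset of $\mathbb{R}_{\ge0}$ containing $0$ and $1$ and closed under the usual addition and multiplication. For a semidomain $S$ (subset of an integral domain containing $0,1$ and closed under $+,\cdot$), $S^*=S\setminus\{0\}$ is a multiplicative monoid; an atom is a nonunit $a\in S^*$ such that $a=bc$ with $b,c\in S^*$ forces $b$ or $c$ to be a unit; $S$ is atomic if every nonunit of $S^*$ is a finite product of atoms; $S$ satisfies ACCP if every ascending chain of principal ideals $b_1S^*\subseteq b_2S^*\subseteq\cdots$ of the monoid $S^*$ eventually stabilizes. *)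

theory Defs
  imports Complex_Main
begin

inductive_set add_submonoid_gen :: "real set \<Rightarrow> real set" for A :: "real set" where
  zero: "0 \<in> add_submonoid_gen A"
| gen: "a \<in> A \<Longrightarrow> a \<in> add_submonoid_gen A"
| add: "x \<in> add_submonoid_gen A \<Longrightarrow> y \<in> add_submonoid_gen A \<Longrightarrow> x + y \<in> add_submonoid_gen A"

definition positive_semiring :: "real set \<Rightarrow> bool" where
  "positive_semiring S \<longleftrightarrow> S \<subseteq> {0..} \<and> 0 \<in> S \<and> 1 \<in> S \<and>
     (\<forall>x\<in>S. \<forall>y\<in>S. x + y \<in> S \<and> x * y \<in> S)"

definition sr_unit :: "real set \<Rightarrow> real \<Rightarrow> bool" where
  "sr_unit S u \<longleftrightarrow> u \<in> S - {0} \<and> (\<exists>v\<in>S - {0}. u * v = 1)"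

definition sr_atom :: "real set \<Rightarrow> real \<Rightarrow> bool" where
  "sr_atom S a \<longleftrightarrow> a \<in> S - {0} \<and> \<not> sr_unit S a \<and>
     (\<forall>b\<in>S - {0}. \<forall>c\<in>S - {0}. a = b * c \<longrightarrow> sr_unit S b \<or> sr_unit S c)"

definition sr_atomic :: "real set \<Rightarrow> bool" where
  "sr_atomic S \<longleftrightarrow> (\<forall>x\<in>S - {0}. \<not> sr_unit S x \<longrightarrow>
     (\<exists>as. as \<noteq> [] \<and> (\<forall>a\<in>set as. sr_atom S a) \<and> x = prod_list as))"

definition sr_principal :: "real set \<Rightarrow> real \<Rightarrow> real set" where
  "sr_principal S b = {b * s | s. s \<in> S - {0}}"

definition sr_ACCP :: "real set \<Rightarrow> bool" where
  "sr_ACCP S \<longleftrightarrow> (\<forall>b :: nat \<Rightarrow> real. (\<forall>n. b n \<in> S - {0}) \<longrightarrow>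
     (\<forall>n. sr_principal S (b n) \<subseteq> sr_principal S (b (Suc n))) \<longrightarrow>
     (\<exists>N. \<forall>n\<ge>N. sr_principal S (b n) = sr_principal S (b N)))"

end

theory Submission
  imports Defs "HOL-Computational_Algebra.Polynomial" "HOL-Computational_Algebra.Primes" "HOL-Library.Multiset"
begin

text \<open>
  Every element of \<open>S\<^sub>r\<close> is a finite sum of powers of \<open>r = a / b\<close>, so it has a power of
  \<open>b\<close> as denominator, and \<open>exp\<close> turns addition in \<open>S\<^sub>r\<close> into multiplication in
  \<open>E(S\<^sub>r)\<close>. Finitely many elements of \<open>S\<^sub>r\<close> lie on a grid \<open>\<nat> / N\<close>, and by Hermite's
  argument the numbers \<open>exp (k / N)\<close> are linearly independent over \<open>\<int>\<close>; hence every
  \<open>x \<in> E(S\<^sub>r)\<close> is \<open>\<Sum>s\<in>#M. exp s\<close> for a unique multiset \<open>M\<close> of exponents, and the sizes of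
  these multisets multiply.

  Atomicity: write \<open>x = exp t * h\<close> where \<open>t\<close> is the greatest common divisor in \<open>S\<^sub>r\<close> of
  the exponents of \<open>x\<close>. It exists because every common divisor is dominated by one whose
  denominator divides that of the exponents, and there are only finitely many of those.
  The factor \<open>exp t\<close> is a product of the atoms \<open>exp (r ^ n)\<close> (\<open>r ^ n\<close> is not a sum of
  two nonzero elements of \<open>S\<^sub>r\<close>, as \<open>a\<close> does not divide a power of \<open>b\<close>), while \<open>h\<close> has
  no factor \<open>exp v\<close> with \<open>v \<noteq> 0\<close>, so any nontrivial factorization of \<open>h\<close> has factors
  of smaller multiset size, and induction applies.

  ACCP fails because \<open>a r\<^sup>n = a r\<^sup>n\<^sup>+\<^sup>1 + (b - a) r\<^sup>n\<^sup>+\<^sup>1\<close> makes \<open>exp (a r\<^sup>n\<^sup>+\<^sup>1)\<close> a divisor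
  of \<open>exp (a r\<^sup>n)\<close>; as all nonzero elements of \<open>E(S\<^sub>r)\<close> are \<open>\<ge> 1\<close> and the sequence
  decreases strictly, the chain of principal ideals never stabilizes.
\<close>

section \<open>Hermite's linear independence of the exponentials \<open>exp (k / N)\<close>\<close>

definition int_poly :: "real poly \<Rightarrow> bool" where
  "int_poly P \<longleftrightarrow> (\<forall>i. coeff P i \<in> \<int>)"

lemma int_poly_mult: "int_poly P \<Longrightarrow> int_poly Q \<Longrightarrow> int_poly (P * Q)"
  unfolding int_poly_def coeff_mult by (auto intro!: Ints_sum Ints_mult)

lemma int_poly_1: "int_poly 1"
  unfolding int_poly_def by (auto simp: coeff_1)

lemma int_poly_power: "int_poly P \<Longrightarrow> int_poly (P ^ n)"
  by (induction n) (auto intro: int_poly_mult int_poly_1)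

lemma int_poly_prod: "(\<And>i. i \<in> A \<Longrightarrow> int_poly (f i)) \<Longrightarrow> int_poly (\<Prod>i\<in>A. f i)"
  by (induction A rule: infinite_finite_induct) (auto intro: int_poly_mult int_poly_1)

lemma int_poly_linear: "c \<in> \<int> \<Longrightarrow> int_poly [:c, 1:]"
  unfolding int_poly_def by (auto simp: coeff_pCons split: nat.splits)

lemma pcompose_power_left: "pcompose (P ^ n) Q = pcompose P Q ^ n"
  by (induction n) (auto simp: pcompose_mult pcompose_1)

lemma higher_pderiv_pcompose_linear:
  "(pderiv ^^ j) (pcompose P [:k, c:]) = smult (c ^ j) (pcompose ((pderiv ^^ j) P) [:k, c::real:])"
  by (induction j) (auto simp: pderiv_pcompose pderiv_pCons pderiv_smult mult.commute)

lemma poly_higher_pderiv_eq_coeff_shift: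
  "poly ((pderiv ^^ j) P) x = fact j * coeff (pcompose P [:x, 1:]) j" for P :: "real poly"
proof -
  have "poly ((pderiv ^^ j) P) x = poly (pcompose ((pderiv ^^ j) P) [:x, 1:]) 0"
    by (simp add: poly_pcompose)
  also have "\<dots> = poly ((pderiv ^^ j) (pcompose P [:x, 1:])) 0"
    using higher_pderiv_pcompose_linear[of j P x 1] by simp
  finally show ?thesis
    by (simp add: poly_0_coeff_0 coeff_higher_pderiv pochhammer_fact)
qed

lemma higher_pderiv_eq_0_if_degree_less:
  assumes "degree P < n" shows "(pderiv ^^ n) (P :: real poly) = 0"
proof (rule poly_eqI)
  fix i
  have "coeff P (i + n) = 0" using assms by (intro coeff_eq_0) simp
  then show "coeff ((pderiv ^^ n) P) i = coeff 0 i" by (simp add: coeff_higher_pderiv)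
qed

lemma coeff_x_power_mult: "coeff ([:0, 1:] ^ n * H) j = (if j < n then 0 else coeff H (j - n))"
  using coeff_monom_mult[of 1 n H j] by (simp add: monom_altdef)

lemma fact_div_fact_Ints: "p \<le> j \<Longrightarrow> (fact j / fact p :: real) \<in> \<int>"
proof -
  assume "p \<le> j"
  then obtain d where "fact j = fact p * (d::nat)" by (auto elim: dvdE dest: fact_dvd)
  then have "(fact j :: real) = fact p * real d" by (metis of_nat_fact of_nat_mult)
  then show ?thesis by simp
qed

lemma weighted_coeff_sum_x_power_mult:
  assumes "int_poly H"
  shows "\<exists>W\<in>\<int>. (\<Sum>j<L. real N ^ j * fact j * coeff ([:0, 1:] ^ e * H) j)
                  = (if e < L then fact e * real N ^ e * coeff H 0 else 0) + fact (Suc e) * W"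
proof -
  define w where "w j = (if j \<le> e then 0 else real N ^ j * (fact j / fact (Suc e)) * coeff H (j - e))" for j
  have w_Ints: "w j \<in> \<int>" for j
  proof (cases "j \<le> e")
    case False
    then have "real N ^ j * (fact j / fact (Suc e)) * coeff H (j - e) \<in> \<int>"
      using assms(1) fact_div_fact_Ints[of "Suc e" j] unfolding int_poly_def
      by (intro Ints_mult Ints_power) auto
    then show ?thesis using False by (simp add: w_def)
  qed (simp add: w_def)
  have weighted_coeff: "real N ^ j * fact j * coeff ([:0, 1:] ^ e * H) j
      = (if j = e then fact e * real N ^ e * coeff H 0 else 0) + fact (Suc e) * w j" for j
    by (cases j e rule: linorder_cases) (simp_all add: coeff_x_power_mult w_def)
  have "(\<Sum>j<L. real N ^ j * fact j * coeff ([:0, 1:] ^ e * H) j)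
      = (if e < L then fact e * real N ^ e * coeff H 0 else 0) + fact (Suc e) * (\<Sum>j<L. w j)"
    unfolding weighted_coeff by (simp add: sum.distrib sum_distrib_left)
  then show ?thesis using w_Ints by (intro bexI[of _ "\<Sum>j<L. w j"] Ints_sum) auto
qed

definition pderiv_sum :: "real poly \<Rightarrow> real poly" where
  "pderiv_sum f = (\<Sum>j<degree f + 1. (pderiv ^^ j) f)"

lemma pderiv_sum_minus_pderiv: "pderiv_sum f - pderiv (pderiv_sum f) = f"
proof -
  let ?L = "degree f + 1"
  have "pderiv (sum g A) = (\<Sum>x\<in>A. pderiv (g x))" for g :: "nat \<Rightarrow> real poly" and A
    using higher_pderiv_sum[of 1] by simp
  then have "pderiv (pderiv_sum f) = (\<Sum>j<?L. (pderiv ^^ Suc j) f)"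
    by (simp only: pderiv_sum_def funpow.simps(2) o_apply)
  then have "pderiv_sum f - pderiv (pderiv_sum f) = - (\<Sum>j<?L. (pderiv ^^ Suc j) f - (pderiv ^^ j) f)"
    unfolding pderiv_sum_def by (simp add: sum_subtractf)
  also have "(\<Sum>j<?L. (pderiv ^^ Suc j) f - (pderiv ^^ j) f) = (pderiv ^^ ?L) f - f"
    using sum_lessThan_telescope[of "\<lambda>j. (pderiv ^^ j) f" ?L] by simp
  also have "(pderiv ^^ ?L) f = 0" by (rule higher_pderiv_eq_0_if_degree_less) simp
  finally show ?thesis by simp
qed

text \<open>
  The mean value theorem for \<open>\<lambda>x. exp (- x) * poly (pderiv_sum f) x\<close>, whose derivative is
  \<open>- exp (- x) * poly f x\<close>.\<close>
lemma pderiv_sum_exp_estimate: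
  assumes "0 < t" and bound: "\<And>y. 0 \<le> y \<Longrightarrow> y \<le> t \<Longrightarrow> \<bar>poly f y\<bar> \<le> B"
  shows "\<bar>poly (pderiv_sum f) t - exp t * poly (pderiv_sum f) 0\<bar> \<le> t * exp t * B"
proof -
  define F where "F = pderiv_sum f"
  define phi where "phi x = exp (- x) * poly F x" for x
  have "DERIV phi x :> - exp (- x) * poly f x" for x
  proof -
    have "DERIV phi x :> - exp (- x) * poly F x + exp (- x) * poly (pderiv F) x"
      unfolding phi_def by (auto intro!: derivative_eq_intros)
    moreover have "poly F x - poly (pderiv F) x = poly f x"
      using pderiv_sum_minus_pderiv[of f] unfolding F_def by (metis poly_diff)
    ultimately show ?thesis by (simp add: algebra_simps)
  qed
  then obtain z where z: "0 < z" "z < t" and mvt: "phi t - phi 0 = t * (- exp (- z) * poly f z)"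
    using MVT2[OF assms(1), of phi] by force
  have "exp (- z) * \<bar>poly f z\<bar> \<le> 1 * B"
    using z bound[of z] by (intro mult_mono) auto
  then have "\<bar>phi t - phi 0\<bar> \<le> t * B"
    using z mvt by (simp add: abs_mult mult_left_mono)
  have "poly F t - exp t * poly F 0 = exp t * (phi t - phi 0)"
    by (simp add: phi_def algebra_simps exp_minus field_simps)
  then have "\<bar>poly F t - exp t * poly F 0\<bar> = exp t * \<bar>phi t - phi 0\<bar>"
    by (simp add: abs_mult)
  also have "\<dots> \<le> exp t * (t * B)"
    using \<open>\<bar>phi t - phi 0\<bar> \<le> t * B\<close> by (intro mult_left_mono) auto
  finally show ?thesis unfolding F_def by (simp add: mult_ac)
qed

definition hermite_poly :: "nat \<Rightarrow> nat \<Rightarrow> real poly" where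
  "hermite_poly p m = [:0, 1:] ^ (p - 1) * (\<Prod>i\<in>{1..m}. [:- real i, 1:] ^ p)"

definition hermite_const :: "nat \<Rightarrow> nat \<Rightarrow> int" where
  "hermite_const p m = (\<Prod>i\<in>{1..m}. (- int i) ^ p)"

definition hermite_F :: "nat \<Rightarrow> nat \<Rightarrow> nat \<Rightarrow> real poly" where
  "hermite_F N p m = pderiv_sum (pcompose (hermite_poly p m) [:0, real N:])"

lemma hermite_poly_shift:
  "pcompose (hermite_poly p m) [:real k, 1:] =
     [:real k, 1:] ^ (p - 1) * (\<Prod>i\<in>{1..m}. [:real k - real i, 1:] ^ p)"
  by (simp add: hermite_poly_def pcompose_mult pcompose_power_left pcompose_prod pcompose_pCons)

lemma coeff_hermite_poly_const:
  "coeff (\<Prod>i\<in>{1..m}. [:- real i, 1:] ^ p) 0 = of_int (hermite_const p m)"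
  unfolding hermite_const_def poly_0_coeff_0[symmetric] by (simp add: poly_prod)

lemma hermite_const_nonzero: "hermite_const p m \<noteq> 0"
  unfolding hermite_const_def by (auto simp: prod_zero_iff)

lemma prime_not_dvd_hermite_const:
  assumes "prime p" "m < p" shows "\<not> int p dvd hermite_const p m"
proof
  assume "int p dvd hermite_const p m"
  then obtain i where i: "i \<in> {1..m}" "int p dvd (- int i) ^ p"
    unfolding hermite_const_def using assms(1) by (auto simp: prime_dvd_prod_iff)
  then have "p dvd i"
    using prime_dvd_power[of "int p"] assms(1) by (metis dvd_minus_iff int_dvd_int_iff prime_nat_int_transfer)
  then show False using i assms by (auto dest: dvd_imp_le)
qed

lemma degree_hermite_poly: "p - 1 \<le> degree (hermite_poly p m)"
proof (rule le_degree)
  have "coeff (hermite_poly p m) (p - 1) = coeff (\<Prod>i\<in>{1..m}. [:- real i, 1:] ^ p) 0"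
    unfolding hermite_poly_def by (simp add: coeff_x_power_mult)
  also have "\<dots> = of_int (hermite_const p m)" by (rule coeff_hermite_poly_const)
  finally have "coeff (hermite_poly p m) (p - 1) = of_int (hermite_const p m)" .
  then show "coeff (hermite_poly p m) (p - 1) \<noteq> 0" using hermite_const_nonzero by simp
qed

lemma hermite_poly_shift_factor:
  assumes "k \<in> {1..m}"
  obtains H where "int_poly H" "pcompose (hermite_poly p m) [:real k, 1:] = [:0, 1:] ^ p * H"
proof
  let ?H = "[:real k, 1:] ^ (p - 1) * (\<Prod>i\<in>{1..m} - {k}. [:real k - real i, 1:] ^ p)"
  show "int_poly ?H"
    by (intro int_poly_mult int_poly_power int_poly_prod int_poly_linear) auto
  have "(\<Prod>i\<in>{1..m}. [:real k - real i, 1:] ^ p) =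
        [:0, 1:] ^ p * (\<Prod>i\<in>{1..m} - {k}. [:real k - real i, 1:] ^ p)"
    using prod.remove[OF _ assms, of "\<lambda>i. [:real k - real i, 1:] ^ p"] by simp
  then show "pcompose (hermite_poly p m) [:real k, 1:] = [:0, 1:] ^ p * ?H"
    unfolding hermite_poly_shift by (simp add: algebra_simps)
qed

lemma poly_hermite_F:
  assumes "N > 0"
  shows "poly (hermite_F N p m) (real k / real N) =
    (\<Sum>j<degree (hermite_poly p m) + 1. real N ^ j * fact j * coeff (pcompose (hermite_poly p m) [:real k, 1:]) j)"
proof -
  have "poly ((pderiv ^^ j) (pcompose (hermite_poly p m) [:0, real N:])) (real k / real N) =
        real N ^ j * fact j * coeff (pcompose (hermite_poly p m) [:real k, 1:]) j" for j
    using assms by (simp add: higher_pderiv_pcompose_linear poly_pcompose poly_higher_pderiv_eq_coeff_shift)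
  then show ?thesis
    using assms by (simp add: hermite_F_def pderiv_sum_def poly_sum degree_pcompose)
qed

lemma hermite_F_value:
  assumes "N > 0" "p \<ge> 1" "k \<le> m"
  obtains W where "W \<in> \<int>" "poly (hermite_F N p m) (real k / real N) =
     fact (p - 1) * ((if k = 0 then real N ^ (p - 1) * of_int (hermite_const p m) else 0) + real p * W)"
proof -
  let ?L = "degree (hermite_poly p m) + 1"
  let ?V = "\<lambda>G. \<Sum>j<?L. real N ^ j * fact j * coeff G j"
  have L: "p - 1 < ?L" using degree_hermite_poly[of p m] by linarith
  have fact_p: "fact p = fact (p - 1) * (real p :: real)"
    using assms(2) by (metis Suc_diff_1 fact_Suc less_le_trans less_numeral_extra(1) mult.commute of_nat_Suc)
  have F_value: "poly (hermite_F N p m) (real k / real N) = ?V (pcompose (hermite_poly p m) [:real k, 1:])"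
    using poly_hermite_F[OF assms(1)] .
  show ?thesis
  proof (cases "k = 0")
    case True
    define H where "H = (\<Prod>i\<in>{1..m}. [:- real i, 1:] ^ p)"
    have "int_poly H" unfolding H_def by (intro int_poly_prod int_poly_power int_poly_linear) auto
    then obtain W where W: "W \<in> \<int>" "?V ([:0, 1:] ^ (p - 1) * H)
        = fact (p - 1) * real N ^ (p - 1) * coeff H 0 + fact (Suc (p - 1)) * W"
      using weighted_coeff_sum_x_power_mult[where L = ?L and e = "p - 1"] L by auto
    have shift: "pcompose (hermite_poly p m) [:real k, 1:] = [:0, 1:] ^ (p - 1) * H"
      using True by (simp add: hermite_poly_def H_def)
    have "fact (Suc (p - 1)) = fact (p - 1) * (real p :: real)"
      using fact_p assms(2) by simp
    then have "poly (hermite_F N p m) (real k / real N)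
        = fact (p - 1) * (real N ^ (p - 1) * of_int (hermite_const p m) + real p * W)"
      unfolding F_value shift W(2) unfolding H_def coeff_hermite_poly_const by (simp add: algebra_simps)
    then show ?thesis using that[OF W(1)] True by simp
  next
    case False
    then obtain H where "int_poly H" and shift: "pcompose (hermite_poly p m) [:real k, 1:] = [:0, 1:] ^ p * H"
      using hermite_poly_shift_factor[of k m p] assms(3) by auto
    then obtain W where W: "W \<in> \<int>" "?V ([:0, 1:] ^ p * H)
        = (if p < ?L then fact p * real N ^ p * coeff H 0 else 0) + fact (Suc p) * W"
      using weighted_coeff_sum_x_power_mult by blast
    define W' where "W' = (if p < ?L then real N ^ p * coeff H 0 else 0) + real (Suc p) * W"
    have "W' \<in> \<int>"
      unfolding W'_def using W(1) \<open>int_poly H\<close> by (intro Ints_add Ints_mult) (auto simp: int_poly_def)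
    moreover have "poly (hermite_F N p m) (real k / real N) = fact (p - 1) * (real p * W')"
      unfolding F_value shift W(2) W'_def fact_Suc[of p] fact_p by (simp add: algebra_simps)
    ultimately show ?thesis using that[of W'] False by simp
  qed
qed

lemma hermite_poly_bound:
  assumes "m \<ge> 1" "0 \<le> y" "y \<le> real m"
  shows "\<bar>poly (hermite_poly p m) y\<bar> \<le> (real m ^ (m + 1)) ^ p"
proof -
  have "\<bar>poly (hermite_poly p m) y\<bar> = \<bar>y\<bar> ^ (p - 1) * (\<Prod>i\<in>{1..m}. \<bar>y - real i\<bar> ^ p)"
    by (simp add: hermite_poly_def poly_prod abs_prod power_abs abs_mult)
  also have "\<dots> \<le> real m ^ p * (\<Prod>i\<in>{1..m}. real m ^ p)"
  proof (rule mult_mono)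
    have "\<bar>y\<bar> ^ (p - 1) \<le> real m ^ (p - 1)" using assms by (intro power_mono) auto
    also have "\<dots> \<le> real m ^ p" using assms by (intro power_increasing) auto
    finally show "\<bar>y\<bar> ^ (p - 1) \<le> real m ^ p" .
    show "(\<Prod>i\<in>{1..m}. \<bar>y - real i\<bar> ^ p) \<le> (\<Prod>i\<in>{1..m}. real m ^ p)"
      using assms by (intro prod_mono conjI power_mono) auto
  qed (auto intro: prod_nonneg)
  also have "\<dots> = (real m ^ (m + 1)) ^ p"
    by (simp add: power_mult_distrib flip: power_mult) (simp add: mult.commute)
  finally show ?thesis .
qed

lemma hermite_F_exp_estimate:
  assumes "N > 0" "m \<ge> 1" "0 < t" "t \<le> real m / real N"
  shows "\<bar>poly (hermite_F N p m) t - exp t * poly (hermite_F N p m) 0\<bar> \<le> t * exp t * (real m ^ (m + 1)) ^ p"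
  unfolding hermite_F_def
proof (rule pderiv_sum_exp_estimate[OF assms(3)])
  fix y assume "0 \<le> y" "y \<le> t"
  then have "real N * y \<le> real N * (real m / real N)"
    using assms(4) by (intro mult_left_mono) auto
  then have "real N * y \<le> real m"
    using assms(1) by simp
  then show "\<bar>poly (pcompose (hermite_poly p m) [:0, real N:]) y\<bar> \<le> (real m ^ (m + 1)) ^ p"
    using hermite_poly_bound[of m "real N * y" p] assms(2) \<open>0 \<le> y\<close> by (simp add: poly_pcompose mult.commute)
qed

lemma hermite_sum_eq_fact_mult:
  fixes c :: "nat \<Rightarrow> int"
  assumes "N > 0" "p \<ge> 1"
  obtains z where "(\<Sum>k\<le>m. of_int (c k) * poly (hermite_F N p m) (real k / real N))
    = fact (p - 1) * of_int (c 0 * int N ^ (p - 1) * hermite_const p m + int p * z)"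
proof -
  let ?F = "hermite_F N p m" and ?P = "hermite_const p m"
  have "\<forall>k\<in>{..m}. \<exists>W. W \<in> \<int> \<and> poly ?F (real k / real N) =
      fact (p - 1) * ((if k = 0 then real N ^ (p - 1) * of_int ?P else 0) + real p * W)"
    using hermite_F_value[OF assms] by (metis atMost_iff)
  then obtain W where W: "\<And>k. k \<le> m \<Longrightarrow> W k \<in> \<int> \<and> poly ?F (real k / real N) =
      fact (p - 1) * ((if k = 0 then real N ^ (p - 1) * of_int ?P else 0) + real p * W k)"
    by (metis atMost_iff)
  have "(\<Sum>k\<le>m. of_int (c k) * W k) \<in> \<int>" using W by (intro Ints_sum Ints_mult) auto
  then obtain z where z: "(\<Sum>k\<le>m. of_int (c k) * W k) = of_int z" by (auto elim: Ints_cases)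
  have "(\<Sum>k\<le>m. of_int (c k) * poly ?F (real k / real N)) = (\<Sum>k\<le>m. of_int (c k) *
      (fact (p - 1) * ((if k = 0 then real N ^ (p - 1) * of_int ?P else 0) + real p * W k)))"
    using W by (intro sum.cong) auto
  also have "\<dots> = fact (p - 1) * ((\<Sum>k\<le>m. of_int (c k) * (if k = 0 then real N ^ (p - 1) * of_int ?P else 0))
       + real p * (\<Sum>k\<le>m. of_int (c k) * W k))"
    by (simp add: algebra_simps sum.distrib sum_distrib_left)
  also have "(\<Sum>k\<le>m. of_int (c k) * (if k = 0 then real N ^ (p - 1) * of_int ?P else 0)) =
      of_int (c 0) * real N ^ (p - 1) * of_int ?P"
    by (simp add: if_distrib sum.delta cong: if_cong)
  also have "fact (p - 1) * (of_int (c 0) * real N ^ (p - 1) * of_int ?P + real p * (\<Sum>k\<le>m. of_int (c k) * W k))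
      = fact (p - 1) * of_int (c 0 * int N ^ (p - 1) * ?P + int p * z)"
    by (simp add: z)
  finally show ?thesis by (rule that)
qed

text \<open>
  The integer multiplier is nonzero because the prime \<open>p\<close> divides none of \<open>c 0\<close>, \<open>N\<close>
  and \<open>hermite_const p m\<close>.\<close>
lemma hermite_sum_lower_bound:
  fixes c :: "nat \<Rightarrow> int"
  assumes "N > 0" "c 0 \<noteq> 0" "prime p" "nat \<bar>c 0\<bar> < p" "N < p" "m < p"
  shows "fact (p - 1) \<le> \<bar>\<Sum>k\<le>m. of_int (c k) * poly (hermite_F N p m) (real k / real N)\<bar>"
proof -
  have p: "p \<ge> 1" "prime (int p)" using assms(3) prime_ge_1_nat by auto
  obtain z where sum_eq: "(\<Sum>k\<le>m. of_int (c k) * poly (hermite_F N p m) (real k / real N))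
      = fact (p - 1) * of_int (c 0 * int N ^ (p - 1) * hermite_const p m + int p * z)"
    using hermite_sum_eq_fact_mult[OF assms(1) p(1)] .
  have "\<not> int p dvd c 0" using assms(2,4) by (auto dest: dvd_imp_le_int)
  moreover have "\<not> int p dvd int N ^ (p - 1)"
  proof
    assume "int p dvd int N ^ (p - 1)"
    then have "int p dvd int N" using prime_dvd_power[OF p(2)] by blast
    then show False using assms(1,5) by (auto dest: dvd_imp_le)
  qed
  moreover have "\<not> int p dvd hermite_const p m" using prime_not_dvd_hermite_const assms(3,6) by blast
  ultimately have "\<not> int p dvd c 0 * int N ^ (p - 1) * hermite_const p m"
    using p(2) by (simp add: prime_dvd_mult_iff)
  then have "c 0 * int N ^ (p - 1) * hermite_const p m + int p * z \<noteq> 0"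
    by (metis add.commute add_diff_cancel_left' diff_0 dvd_minus_iff dvd_triv_left)
  then have "1 \<le> \<bar>of_int (c 0 * int N ^ (p - 1) * hermite_const p m + int p * z) :: real\<bar>"
    by linarith
  then show ?thesis unfolding sum_eq abs_mult by (simp add: mult_le_cancel_left1)
qed

lemma hermite_sum_upper_bound:
  fixes c :: "nat \<Rightarrow> int"
  assumes "N > 0" "m \<ge> 1" "(\<Sum>k\<le>m. of_int (c k) * exp (real k / real N)) = 0"
  shows "\<bar>\<Sum>k\<le>m. of_int (c k) * poly (hermite_F N p m) (real k / real N)\<bar>
    \<le> (\<Sum>k\<le>m. \<bar>of_int (c k)\<bar> * (real k / real N) * exp (real k / real N)) * (real m ^ (m + 1)) ^ p"
proof -
  let ?F = "hermite_F N p m" and ?C = "(real m ^ (m + 1)) ^ p"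
  have "(\<Sum>k\<le>m. of_int (c k) * (poly ?F (real k / real N) - exp (real k / real N) * poly ?F 0))
      = (\<Sum>k\<le>m. of_int (c k) * poly ?F (real k / real N))
        - (\<Sum>k\<le>m. of_int (c k) * exp (real k / real N)) * poly ?F 0"
    by (simp only: sum_subtractf sum_distrib_right right_diff_distrib mult.assoc)
  then have "\<bar>\<Sum>k\<le>m. of_int (c k) * poly ?F (real k / real N)\<bar>
      = \<bar>\<Sum>k\<le>m. of_int (c k) * (poly ?F (real k / real N) - exp (real k / real N) * poly ?F 0)\<bar>"
    unfolding assms(3) by simp
  also have "\<dots> \<le> (\<Sum>k\<le>m. \<bar>of_int (c k) * (poly ?F (real k / real N) - exp (real k / real N) * poly ?F 0)\<bar>)"
    by (rule sum_abs)
  also have "\<dots> \<le> (\<Sum>k\<le>m. \<bar>of_int (c k)\<bar> * (real k / real N) * exp (real k / real N) * ?C)"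
  proof (rule sum_mono)
    fix k assume "k \<in> {..m}"
    then have "real k / real N \<le> real m / real N" by (simp add: divide_right_mono)
    then have "\<bar>poly ?F (real k / real N) - exp (real k / real N) * poly ?F 0\<bar>
        \<le> (real k / real N) * exp (real k / real N) * ?C"
      using hermite_F_exp_estimate[OF assms(1,2), of "real k / real N" p] assms(1) by (cases "k = 0") auto
    then show "\<bar>of_int (c k) * (poly ?F (real k / real N) - exp (real k / real N) * poly ?F 0)\<bar>
        \<le> \<bar>of_int (c k)\<bar> * (real k / real N) * exp (real k / real N) * ?C"
      unfolding abs_mult mult.assoc by (intro mult_left_mono) auto
  qed
  finally show ?thesis by (simp only: sum_distrib_right)
qed

text \<open>
  Hermite's argument: for a large prime \<open>p\<close>, \<open>\<Sum>k\<le>m. c k * F (k / N)\<close> is a nonzero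
  multiple of \<open>(p - 1)!\<close>, yet if the exponential sum vanished it would be \<open>O(C ^ p)\<close>.\<close>
lemma exp_int_combination_nonzero:
  fixes c :: "nat \<Rightarrow> int"
  assumes "N > 0" "c 0 \<noteq> 0"
  shows "(\<Sum>k\<le>m. of_int (c k) * exp (real k / real N)) \<noteq> 0"
proof
  assume sum_0: "(\<Sum>k\<le>m. of_int (c k) * exp (real k / real N)) = 0"
  have m: "m \<ge> 1" using sum_0 assms(2) by (cases m) auto
  define C where "C = real m ^ (m + 1)"
  define B where "B = (\<Sum>k\<le>m. \<bar>of_int (c k)\<bar> * (real k / real N) * exp (real k / real N))"
  have "B \<ge> 0" "C \<ge> 0" unfolding B_def C_def by (auto intro: sum_nonneg)
  have "(\<lambda>n. (B * C + 1) * (C ^ n / fact n)) \<longlonglongrightarrow> (B * C + 1) * 0"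
    using summable_LIMSEQ_zero[OF summable_exp[of C]]
    by (intro tendsto_mult tendsto_const) (simp add: inverse_eq_divide)
  then have "eventually (\<lambda>n. (B * C + 1) * (C ^ n / fact n) < 1) sequentially"
    by (intro order_tendstoD) auto
  then obtain n0 where n0: "\<And>n. n \<ge> n0 \<Longrightarrow> (B * C + 1) * (C ^ n / fact n) < 1"
    by (auto simp: eventually_sequentially)
  obtain p where p: "prime p" "n0 + nat \<bar>c 0\<bar> + N + m + 1 < p"
    using bigger_prime by blast
  have "fact (p - 1) \<le> B * C ^ p"
    using hermite_sum_lower_bound[where c = c and m = m, OF assms p(1)] hermite_sum_upper_bound[OF assms(1) m sum_0, of p] p(2)
    unfolding B_def C_def by linarith
  also have "\<dots> = B * C * C ^ (p - 1)" using p(2) by (cases p) auto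
  also have "\<dots> \<le> (B * C + 1) * C ^ (p - 1)" using \<open>C \<ge> 0\<close> by (intro mult_right_mono) auto
  also have "\<dots> < fact (p - 1)" using n0[of "p - 1"] p(2) by (simp add: field_simps)
  finally show False by simp
qed

lemma exp_int_combination_eq_0:
  fixes c :: "nat \<Rightarrow> int"
  assumes N: "N > 0" and sum_0: "(\<Sum>k\<le>m. of_int (c k) * exp (real k / real N)) = 0"
  shows "\<forall>k\<le>m. c k = 0"
proof (rule ccontr)
  assume "\<not> (\<forall>k\<le>m. c k = 0)"
  then obtain k where k: "k \<le> m" "c k \<noteq> 0" by auto
  define j where "j = (LEAST k. c k \<noteq> 0)"
  have cj: "c j \<noteq> 0" unfolding j_def by (rule LeastI[of _ k]) (use k in auto)
  have jk: "j \<le> k" unfolding j_def by (rule Least_le) (use k in auto)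
  have below_j: "i < j \<Longrightarrow> c i = 0" for i unfolding j_def using not_less_Least by blast
  have "(\<Sum>k\<le>m. of_int (c k) * exp (real k / real N)) = (\<Sum>k\<in>{j..m}. of_int (c k) * exp (real k / real N))"
    using below_j jk k by (intro sum.mono_neutral_right) auto
  also have "\<dots> = (\<Sum>i\<le>m - j. of_int (c (i + j)) * exp (real (i + j) / real N))"
    using jk k by (intro sum.reindex_bij_witness[of _ "\<lambda>i. i + j" "\<lambda>k. k - j"]) auto
  also have "\<dots> = exp (real j / real N) * (\<Sum>i\<le>m - j. of_int (c (i + j)) * exp (real i / real N))"
    by (simp add: sum_distrib_left add_divide_distrib exp_add algebra_simps)
  finally have "(\<Sum>i\<le>m - j. of_int (c (i + j)) * exp (real i / real N)) = 0" using sum_0 by simp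
  moreover have "(\<Sum>i\<le>m - j. of_int (c (i + j)) * exp (real i / real N)) \<noteq> 0"
    using exp_int_combination_nonzero[OF N, of "\<lambda>i. c (i + j)"] cj by simp
  ultimately show False by simp
qed

lemma of_nat_div_of_nat_Ints_iff: "(real u / real d \<in> \<int>) \<longleftrightarrow> d = 0 \<or> d dvd u"
  using of_int_div_of_int_in_Ints_iff[of "int u" "int d", where 'a = real] by simp

lemma Ints_add_left_cancel: "x \<in> \<int> \<Longrightarrow> x + y \<in> \<int> \<longleftrightarrow> y \<in> \<int>"
  by (metis Ints_add Ints_diff add_diff_cancel_left')

lemma sum_list_Ints: "(\<And>x. x \<in> set xs \<Longrightarrow> f x \<in> \<int>) \<Longrightarrow> (\<Sum>x\<leftarrow>xs. f x) \<in> \<int>"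
  by (induction xs) auto

lemma complement_mod_le_if_dvd_add:
  fixes b c d :: nat
  assumes "b dvd c + d" "\<not> b dvd c"
  shows "b - c mod b \<le> d"
proof -
  have "b > 0" using assms by (cases "b = 0") auto
  have pos: "0 < c mod b" using assms(2) by (simp add: dvd_eq_mod_eq_0)
  have less: "c mod b < b" "d mod b < b" using \<open>b > 0\<close> by auto
  have "b dvd c mod b + d mod b" using assms(1) by (simp add: mod_add_eq dvd_eq_mod_eq_0)
  then obtain k where k: "c mod b + d mod b = b * k" by (auto elim: dvdE)
  have "k = 1"
  proof (rule ccontr)
    assume "k \<noteq> 1"
    then consider "k = 0" | "k \<ge> 2" by linarith
    then show False
    proof cases
      case 2
      then have "b * 2 \<le> b * k" by (intro mult_le_mono2)
      then show False using k less by linarith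
    qed (use k pos in simp)
  qed
  then have "d mod b = b - c mod b" using k by simp
  then show ?thesis using mod_less_eq_dividend[of d b] by simp
qed

lemma finite_bounded_Ints_multiples:
  assumes "K > 0" shows "finite {w :: real. 0 \<le> w \<and> w \<le> B \<and> w * K \<in> \<int>}"
proof (rule finite_subset)
  show "{w. 0 \<le> w \<and> w \<le> B \<and> w * K \<in> \<int>} \<subseteq> (\<lambda>j. real j / K) ` {..nat \<lceil>B * K\<rceil>}"
  proof
    fix w assume w: "w \<in> {w. 0 \<le> w \<and> w \<le> B \<and> w * K \<in> \<int>}"
    then obtain z where z: "w * K = of_int z" by (auto elim: Ints_cases)
    have "0 \<le> (of_int z :: real)" "of_int z \<le> B * K" using w assms unfolding z[symmetric] by (auto intro: mult_right_mono)
    then have "z \<le> \<lceil>B * K\<rceil>" "0 \<le> z" by (simp_all add: le_ceiling_iff)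
    moreover have "w = real (nat z) / K" using z assms \<open>0 \<le> z\<close> by (simp add: field_simps)
    ultimately have "nat z \<le> nat \<lceil>B * K\<rceil>" "w = real (nat z) / K" by auto
    then show "w \<in> (\<lambda>j. real j / K) ` {..nat \<lceil>B * K\<rceil>}" by auto
  qed
qed auto

section \<open>The monoid \<open>S\<^sub>r\<close> generated by the powers of a reduced fraction \<open>r\<close>\<close>

locale reduced_fraction =
  fixes a b :: nat
  assumes two_le_a: "2 \<le> a" and a_less_b: "a < b" and coprime_a_b: "coprime a b"
begin

definition r :: real where "r = real a / real b"

definition Sr :: "real set" where "Sr = add_submonoid_gen (range (\<lambda>n::nat. r ^ n))"

lemma b_pos: "b > 0" using two_le_a a_less_b by simp
lemma r_pos: "0 < r" using two_le_a a_less_b unfolding r_def by simp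
lemma r_less_1: "r < 1" using two_le_a a_less_b unfolding r_def by simp

lemma Sr_zero: "0 \<in> Sr" unfolding Sr_def by (rule add_submonoid_gen.zero)
lemma Sr_power: "r ^ n \<in> Sr" unfolding Sr_def by (rule add_submonoid_gen.gen) auto
lemma Sr_add: "x \<in> Sr \<Longrightarrow> y \<in> Sr \<Longrightarrow> x + y \<in> Sr" unfolding Sr_def by (rule add_submonoid_gen.add)

lemma Sr_nonneg: "x \<in> Sr \<Longrightarrow> 0 \<le> x"
  unfolding Sr_def by (induction rule: add_submonoid_gen.induct) (use r_pos in auto)

lemma Sr_of_nat_mult: "x \<in> Sr \<Longrightarrow> real k * x \<in> Sr"
  by (induction k) (auto simp: Sr_zero algebra_simps intro: Sr_add)

lemma Sr_sum: "(\<And>i. i \<in> I \<Longrightarrow> f i \<in> Sr) \<Longrightarrow> sum f I \<in> Sr"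
  by (induction I rule: infinite_finite_induct) (auto simp: Sr_zero intro: Sr_add)

lemma coeff_sum_in_Sr: "(\<Sum>i\<le>M. real (c i) * r ^ i) \<in> Sr"
  by (intro Sr_sum Sr_of_nat_mult Sr_power)

lemma Sr_eq_sum_list_powers: "x \<in> Sr \<Longrightarrow> \<exists>ks. x = (\<Sum>k\<leftarrow>ks. r ^ k)"
  unfolding Sr_def
proof (induction rule: add_submonoid_gen.induct)
  case (add x y)
  then obtain ks1 ks2 where "x = (\<Sum>k\<leftarrow>ks1. r ^ k)" "y = (\<Sum>k\<leftarrow>ks2. r ^ k)" by blast
  then show ?case by (intro exI[of _ "ks1 @ ks2"]) simp
qed (auto intro: exI[of _ "[]"] exI[of _ "[n]" for n])

lemma Sr_eq_coeff_sum: "x \<in> Sr \<Longrightarrow> \<exists>M c. x = (\<Sum>i\<le>M. real (c i) * r ^ i)"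
proof -
  assume "x \<in> Sr"
  then obtain ks where x: "x = (\<Sum>k\<leftarrow>ks. r ^ k)" using Sr_eq_sum_list_powers by blast
  have "(\<Sum>k\<leftarrow>ks. r ^ k) = (\<Sum>i\<le>M. real (count_list ks i) * r ^ i)" if "set ks \<subseteq> {..M}" for M
    using that
  proof (induction ks)
    case (Cons k ks)
    have "(\<Sum>i\<le>M. real (count_list (k # ks) i) * r ^ i)
        = (\<Sum>i\<le>M. real (count_list ks i) * r ^ i) + (\<Sum>i\<le>M. if i = k then r ^ i else 0)"
      unfolding sum.distrib[symmetric] by (intro sum.cong) (auto simp: algebra_simps)
    then show ?case using Cons by simp
  qed simp
  moreover have "set ks \<subseteq> {..sum_list ks}" using member_le_sum_list by fastforce
  ultimately show ?thesis using x by blast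
qed

lemma r_power_mult_b_power: "i \<le> n \<Longrightarrow> r ^ i * real b ^ n = real (a ^ i * b ^ (n - i))"
proof -
  assume "i \<le> n"
  then have "real b ^ n = real b ^ i * real b ^ (n - i)" by (simp flip: power_add)
  then show ?thesis using b_pos by (simp add: r_def power_divide)
qed

lemma Ints_mult_b_power_mono: "x * real b ^ n \<in> \<int> \<Longrightarrow> n \<le> n' \<Longrightarrow> x * real b ^ n' \<in> \<int>"
proof -
  assume "x * real b ^ n \<in> \<int>" "n \<le> n'"
  moreover from \<open>n \<le> n'\<close> have "x * real b ^ n' = (x * real b ^ n) * real b ^ (n' - n)"
    by (simp add: mult.assoc flip: power_add)
  moreover have "real b ^ (n' - n) \<in> \<int>" by simp
  ultimately show ?thesis by (metis Ints_mult)
qed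

lemma coeff_sum_mult_b_power_Ints: "M \<le> n \<Longrightarrow> (\<Sum>i\<le>M. real (c i) * r ^ i) * real b ^ n \<in> \<int>"
  by (simp add: sum_distrib_right mult.assoc r_power_mult_b_power Ints_sum)

lemma Sr_mult_b_power_Ints: "x \<in> Sr \<Longrightarrow> \<exists>n. x * real b ^ n \<in> \<int>"
  using Sr_eq_coeff_sum coeff_sum_mult_b_power_Ints by blast

text \<open>Here \<open>r ^ (m + 1) * b ^ m = a ^ (m + 1) / b\<close>, with \<open>a\<close> coprime to \<open>b\<close>.\<close>
lemma add_r_power_Ints_iff:
  assumes "y * real b ^ m \<in> \<int>"
  shows "(y + real e * r ^ Suc m) * real b ^ m \<in> \<int> \<longleftrightarrow> b dvd e"
proof -
  have "r ^ Suc m * real b ^ Suc m = real (a ^ Suc m)" using r_power_mult_b_power[of "Suc m" "Suc m"] by simp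
  then have "real e * r ^ Suc m * real b ^ m = real (e * a ^ Suc m) / real b"
    using b_pos by (simp add: field_simps)
  then have "(y + real e * r ^ Suc m) * real b ^ m = y * real b ^ m + real (e * a ^ Suc m) / real b"
    by (simp add: ring_distribs)
  then have "(y + real e * r ^ Suc m) * real b ^ m \<in> \<int> \<longleftrightarrow> real (e * a ^ Suc m) / real b \<in> \<int>"
    using Ints_add_left_cancel[OF assms] by simp
  also have "\<dots> \<longleftrightarrow> b dvd e * a ^ Suc m" using b_pos of_nat_div_of_nat_Ints_iff[of "e * a ^ Suc m" b] by simp
  also have "\<dots> \<longleftrightarrow> b dvd e" using coprime_a_b by (simp add: coprime_commute coprime_dvd_mult_left_iff)
  finally show ?thesis .
qed

lemma coeff_sum_extend:
  "M \<le> n \<Longrightarrow> (\<Sum>i\<le>M. real (c i) * r ^ i) = (\<Sum>i\<le>n. real (if i \<le> M then c i else 0) * r ^ i)"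
  by (rule sum.mono_neutral_cong_left) auto

lemma coeff_sum_reduce_degree:
  "x = (\<Sum>i\<le>M. real (c i) * r ^ i) \<Longrightarrow> x * real b ^ n \<in> \<int> \<Longrightarrow> \<exists>c'. x = (\<Sum>i\<le>n. real (c' i) * r ^ i)"
proof (induction M arbitrary: c)
  case 0
  then show ?case using coeff_sum_extend[of 0 n c] by (intro exI[of _ "\<lambda>i. if i \<le> 0 then c i else 0"]) simp
next
  case (Suc M)
  show ?case
  proof (cases "Suc M \<le> n")
    case True
    then show ?thesis using Suc.prems(1) coeff_sum_extend[of "Suc M" n c]
      by (intro exI[of _ "\<lambda>i. if i \<le> Suc M then c i else 0"]) simp
  next
    case False
    define y where "y = (\<Sum>i\<le>M. real (c i) * r ^ i)"
    have x: "x = y + real (c (Suc M)) * r ^ Suc M" using Suc.prems by (simp add: y_def)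
    have "x * real b ^ M \<in> \<int>" using Suc.prems(2) False by (simp add: Ints_mult_b_power_mono)
    then have "b dvd c (Suc M)"
      using add_r_power_Ints_iff[of y M] coeff_sum_mult_b_power_Ints[of M M c] by (simp add: x y_def)
    then obtain q where q: "c (Suc M) = b * q" by (auto elim: dvdE)
    have "real (c (Suc M)) * r ^ Suc M = real (q * a) * r ^ M"
      using b_pos by (simp add: q r_def)
    moreover have "(\<Sum>i\<le>M. real (c i + (if i = M then q * a else 0)) * r ^ i)
        = y + (\<Sum>i\<le>M. if i = M then real (q * a) * r ^ i else 0)"
      unfolding y_def sum.distrib[symmetric] by (intro sum.cong) (auto simp: algebra_simps)
    ultimately have "x = (\<Sum>i\<le>M. real (c i + (if i = M then q * a else 0)) * r ^ i)"
      by (simp add: x)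
    then show ?thesis using Suc.IH[of "\<lambda>i. c i + (if i = M then q * a else 0)"] Suc.prems(2) by blast
  qed
qed

lemma Sr_split_top:
  assumes "x \<in> Sr" "x * real b ^ Suc m \<in> \<int>"
  obtains y e where "y \<in> Sr" "y * real b ^ m \<in> \<int>" "x = y + real e * r ^ Suc m"
proof -
  obtain M c where "x = (\<Sum>i\<le>M. real (c i) * r ^ i)" using Sr_eq_coeff_sum[OF assms(1)] by blast
  then obtain c' where x: "x = (\<Sum>i\<le>Suc m. real (c' i) * r ^ i)"
    using coeff_sum_reduce_degree assms(2) by blast
  show ?thesis
    by (rule that[of "\<Sum>i\<le>m. real (c' i) * r ^ i" "c' (Suc m)"])
       (auto simp: x coeff_sum_in_Sr coeff_sum_mult_b_power_Ints)
qed

definition common_divisors :: "real set \<Rightarrow> real set" where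
  "common_divisors A = {u \<in> Sr. \<forall>s\<in>A. s - u \<in> Sr}"

text \<open>
  Rounding the top coefficient of a common divisor \<open>u\<close> up to a multiple of \<open>b\<close> keeps it a
  common divisor: every \<open>s \<in> A\<close> has a multiple of \<open>b\<close> as top coefficient, and \<open>s - u\<close>
  must make up the difference.\<close>
lemma common_divisor_round_up:
  assumes A: "\<forall>s\<in>A. s * real b ^ m \<in> \<int>"
    and u: "u \<in> common_divisors A" "u * real b ^ Suc m \<in> \<int>"
  obtains w where "w \<in> common_divisors A" "u \<le> w" "w * real b ^ m \<in> \<int>"
proof -
  have uS: "u \<in> Sr" and uA: "\<forall>s\<in>A. s - u \<in> Sr" using u(1) by (auto simp: common_divisors_def)
  obtain y c where y: "y \<in> Sr" "y * real b ^ m \<in> \<int>" and u_eq: "u = y + real c * r ^ Suc m"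
    using Sr_split_top[OF uS u(2)] by blast
  show ?thesis
  proof (cases "b dvd c")
    case True
    then have "u * real b ^ m \<in> \<int>" using add_r_power_Ints_iff[OF y(2)] u_eq by simp
    then show ?thesis using that u(1) by blast
  next
    case False
    define w where "w = u + real (b - c mod b) * r ^ Suc m"
    have "s - w \<in> Sr" if s: "s \<in> A" for s
    proof -
      have "s * real b ^ Suc m \<in> \<int>" using A s Ints_mult_b_power_mono[of s m "Suc m"] by simp
      then have "(s - u) * real b ^ Suc m \<in> \<int>" using u(2) by (simp add: left_diff_distrib)
      then obtain x d where x: "x \<in> Sr" "x * real b ^ m \<in> \<int>" "s - u = x + real d * r ^ Suc m"
        using Sr_split_top[of "s - u"] uA s by blast
      have "s = (y + x) + real (c + d) * r ^ Suc m" using u_eq x(3) by (simp add: algebra_simps)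
      moreover have "(y + x) * real b ^ m \<in> \<int>" using y(2) x(2) by (simp add: distrib_right)
      ultimately have "b dvd c + d" using add_r_power_Ints_iff[of "y + x" m "c + d"] A s by simp
      then have "b - c mod b \<le> d" using complement_mod_le_if_dvd_add False by blast
      then have "s - w = x + real (d - (b - c mod b)) * r ^ Suc m"
        using x(3) unfolding w_def by (simp add: of_nat_diff algebra_simps)
      moreover have "x + real (d - (b - c mod b)) * r ^ Suc m \<in> Sr"
        by (intro Sr_add x(1) Sr_of_nat_mult Sr_power)
      ultimately show ?thesis by simp
    qed
    moreover have "w \<in> Sr" unfolding w_def by (intro Sr_add uS Sr_of_nat_mult Sr_power)
    moreover have "c + (b - c mod b) = b * (c div b) + b"
      using mod_less_divisor[OF b_pos, of c] minus_mod_eq_mult_div[of c b] mod_less_eq_dividend[of c b] by linarith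
    then have "b dvd c + (b - c mod b)" by simp
    then have "w * real b ^ m \<in> \<int>"
      using add_r_power_Ints_iff[OF y(2), of "c + (b - c mod b)"] unfolding w_def u_eq
      by (simp add: algebra_simps)
    moreover have "u \<le> w" using r_pos by (simp add: w_def)
    ultimately show ?thesis using that by (auto simp: common_divisors_def)
  qed
qed

lemma common_divisor_le_bounded_denominator:
  assumes A: "\<forall>s\<in>A. s * real b ^ D \<in> \<int>"
  shows "u \<in> common_divisors A \<Longrightarrow> u * real b ^ n \<in> \<int> \<Longrightarrow>
    \<exists>w\<in>common_divisors A. u \<le> w \<and> w * real b ^ D \<in> \<int>"
proof (induction n arbitrary: u)
  case 0
  then show ?case using Ints_mult_b_power_mono[of u 0 D] by auto
next
  case (Suc m)
  show ?case
  proof (cases "Suc m \<le> D")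
    case True
    then show ?thesis using Ints_mult_b_power_mono[of u "Suc m" D] Suc.prems by auto
  next
    case False
    then have "\<forall>s\<in>A. s * real b ^ m \<in> \<int>" using A Ints_mult_b_power_mono[of _ D m] by simp
    then obtain w1 where "w1 \<in> common_divisors A" "u \<le> w1" "w1 * real b ^ m \<in> \<int>"
      using common_divisor_round_up Suc.prems by blast
    then show ?thesis using Suc.IH by (meson order_trans)
  qed
qed

lemma greatest_common_divisor_exists:
  assumes "finite A" "A \<noteq> {}" "A \<subseteq> Sr"
  obtains t where "t \<in> common_divisors A" "\<forall>u\<in>common_divisors A. u \<le> t"
proof -
  have "\<forall>s\<in>A. \<exists>n. s * real b ^ n \<in> \<int>" using assms(3) Sr_mult_b_power_Ints by blast
  then obtain n where n: "\<And>s. s \<in> A \<Longrightarrow> s * real b ^ n s \<in> \<int>" by metis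
  define D where "D = Max (n ` A)"
  have AD: "\<forall>s\<in>A. s * real b ^ D \<in> \<int>"
    using n assms(1) Ints_mult_b_power_mono unfolding D_def by (meson Max_ge finite_imageI imageI)
  obtain s0 where s0: "s0 \<in> A" using assms(2) by blast
  define F where "F = {w \<in> common_divisors A. w * real b ^ D \<in> \<int>}"
  have "F \<subseteq> {w. 0 \<le> w \<and> w \<le> s0 \<and> w * real b ^ D \<in> \<int>}"
    using s0 Sr_nonneg by (force simp: F_def common_divisors_def)
  then have "finite F" using finite_bounded_Ints_multiples[of "real b ^ D" s0] b_pos finite_subset by auto
  moreover have "0 \<in> F" using Sr_zero assms(3) by (auto simp: F_def common_divisors_def)
  moreover have "\<exists>w\<in>F. u \<le> w" if "u \<in> common_divisors A" for u
    using common_divisor_le_bounded_denominator[OF AD that] Sr_mult_b_power_Ints that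
    unfolding F_def common_divisors_def by blast
  ultimately show ?thesis
    using that[of "Max F"] by (metis (no_types, lifting) F_def Max_ge Max_in empty_iff mem_Collect_eq order_trans)
qed

lemma sum_list_r_powers_neq_1:
  assumes "\<forall>k\<in>set ks. k \<ge> 1" shows "(\<Sum>k\<leftarrow>ks. r ^ k) \<noteq> 1"
proof
  assume one: "(\<Sum>k\<leftarrow>ks. r ^ k) = 1"
  define K where "K = sum_list ks"
  have "real (b ^ K) / real a = (\<Sum>k\<leftarrow>ks. r ^ k * (real b ^ K / real a))"
    using one sum_list_mult_const[of "\<lambda>k. r ^ k" "real b ^ K / real a" ks] by simp
  also have "\<dots> = (\<Sum>k\<leftarrow>ks. real (a ^ (k - 1) * b ^ (K - k)))"
  proof (intro arg_cong[where f = sum_list] map_cong refl)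
    fix k assume k: "k \<in> set ks"
    have "r ^ k * real b ^ K = real (a ^ k * b ^ (K - k))"
      using member_le_sum_list[OF k] by (intro r_power_mult_b_power) (simp add: K_def)
    moreover have "Suc (k - 1) = k" using assms k by auto
    then have "a ^ k = a * a ^ (k - 1)" by (metis power_Suc)
    ultimately show "r ^ k * (real b ^ K / real a) = real (a ^ (k - 1) * b ^ (K - k))"
      using two_le_a by simp
  qed
  finally have "real (b ^ K) / real a \<in> \<int>" by (simp add: sum_list_Ints)
  then have "a dvd b ^ K" using of_nat_div_of_nat_Ints_iff[of "b ^ K" a] two_le_a by simp
  moreover have "coprime a (b ^ K)" using coprime_a_b by simp
  ultimately have "is_unit a" using coprime_absorb_left by blast
  then show False using two_le_a by simp
qed

lemma r_power_eq_add_Sr: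
  assumes v: "v \<in> Sr" and w: "w \<in> Sr" and eq: "r ^ n = v + w"
  shows "v = 0 \<or> w = 0"
proof (rule ccontr)
  assume "\<not> (v = 0 \<or> w = 0)"
  then have "v > 0" "w > 0" using Sr_nonneg v w by force+
  obtain ks1 ks2 where ks1: "v = (\<Sum>k\<leftarrow>ks1. r ^ k)" and ks2: "w = (\<Sum>k\<leftarrow>ks2. r ^ k)"
    using Sr_eq_sum_list_powers v w by metis
  define ks where "ks = ks1 @ ks2"
  have "r ^ k \<le> v \<or> r ^ k \<le> w" if "k \<in> set ks" for k
    using that member_le_sum_list[of "r ^ k"] r_pos unfolding ks_def ks1 ks2 by force
  then have "r ^ k < r ^ n" if "k \<in> set ks" for k
    using that eq \<open>v > 0\<close> \<open>w > 0\<close> by force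
  then have above_n: "n < k" if "k \<in> set ks" for k
    using that r_pos r_less_1 by (simp add: power_strict_decreasing_iff)
  have "r ^ n = (\<Sum>k\<leftarrow>ks. r ^ k)" using eq by (simp add: ks1 ks2 ks_def)
  also have "\<dots> = (\<Sum>k\<leftarrow>ks. r ^ n * r ^ (k - n))"
    using above_n by (intro arg_cong[where f = sum_list] map_cong refl)
      (metis le_add_diff_inverse less_imp_le power_add)
  also have "\<dots> = r ^ n * (\<Sum>k\<leftarrow>map (\<lambda>k. k - n) ks. r ^ k)"
    by (simp add: sum_list_const_mult o_def)
  finally have "r ^ n * (\<Sum>k\<leftarrow>map (\<lambda>k. k - n) ks. r ^ k) = r ^ n * 1" by simp
  then have "(\<Sum>k\<leftarrow>map (\<lambda>k. k - n) ks. r ^ k) = 1"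
    using r_pos by (subst (asm) mult_left_cancel) auto
  moreover have "\<forall>k\<in>set (map (\<lambda>k. k - n) ks). k \<ge> 1" by (auto dest!: above_n)
  ultimately show False using sum_list_r_powers_neq_1 by blast
qed

end

section \<open>Sums of exponentials over multisets\<close>

definition exp_sum :: "real multiset \<Rightarrow> real" where
  "exp_sum M = (\<Sum>s\<in>#M. exp s)"

lemma exp_sum_empty [simp]: "exp_sum {#} = 0"
  by (simp add: exp_sum_def)

lemma exp_sum_add_mset [simp]: "exp_sum (add_mset s M) = exp s + exp_sum M"
  by (simp add: exp_sum_def)

lemma exp_sum_union [simp]: "exp_sum (M + M') = exp_sum M + exp_sum M'"
  by (simp add: exp_sum_def)

lemma exp_sum_nonneg: "exp_sum M \<ge> 0"
  by (induction M) (auto intro: add_nonneg_nonneg)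

lemma exp_sum_shift: "exp_sum (image_mset ((+) t) M) = exp t * exp_sum M"
  by (induction M) (auto simp: exp_add algebra_simps)

lemma exp_sum_unshift: "exp t * exp_sum (image_mset (\<lambda>s. s - t) M) = exp_sum M"
  by (induction M) (auto simp: algebra_simps simp flip: exp_add)

lemma exp_sum_on_grid:
  assumes "N > 0" "set_mset M \<subseteq> (\<lambda>j. real j / real N) ` {..m}"
  shows "exp_sum M = (\<Sum>j\<le>m. real (count M (real j / real N)) * exp (real j / real N))"
  using assms(2)
proof (induction M)
  case (add x M)
  then obtain j0 where j0: "j0 \<le> m" "x = real j0 / real N" by auto
  have "(x = real j / real N) \<longleftrightarrow> j = j0" for j
    unfolding j0(2) using assms(1) by (auto simp: divide_cancel_right)
  then have "(\<Sum>j\<le>m. real (count (add_mset x M) (real j / real N)) * exp (real j / real N)) =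
        (\<Sum>j\<le>m. real (count M (real j / real N)) * exp (real j / real N))
        + (\<Sum>j\<le>m. if j = j0 then exp (real j / real N) else 0)"
    unfolding sum.distrib[symmetric] by (intro sum.cong) (auto simp: algebra_simps)
  then show ?case using add j0 by simp
qed simp

definition pair_sums :: "real multiset \<Rightarrow> real multiset \<Rightarrow> real multiset" where
  "pair_sums M1 M2 = (\<Sum>s\<in>#M1. image_mset ((+) s) M2)"

lemma pair_sums_empty [simp]: "pair_sums {#} M2 = {#}"
  by (simp add: pair_sums_def)

lemma pair_sums_add_mset [simp]: "pair_sums (add_mset s M1) M2 = image_mset ((+) s) M2 + pair_sums M1 M2"
  by (simp add: pair_sums_def)

lemma exp_sum_pair_sums: "exp_sum (pair_sums M1 M2) = exp_sum M1 * exp_sum M2"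
  by (induction M1) (auto simp: exp_sum_shift algebra_simps)

lemma size_pair_sums: "size (pair_sums M1 M2) = size M1 * size M2"
  by (induction M1) auto

definition atom_factorizable :: "real set \<Rightarrow> real \<Rightarrow> bool" where
  "atom_factorizable S x \<longleftrightarrow> (\<exists>as. as \<noteq> [] \<and> (\<forall>a\<in>set as. sr_atom S a) \<and> x = prod_list as)"

lemma atom_factorizable_atom: "sr_atom S a \<Longrightarrow> atom_factorizable S a"
  unfolding atom_factorizable_def by (intro exI[of _ "[a]"]) auto

lemma atom_factorizable_mult:
  "atom_factorizable S x \<Longrightarrow> atom_factorizable S y \<Longrightarrow> atom_factorizable S (x * y)"
  unfolding atom_factorizable_def by (metis (no_types, lifting) Un_iff append_is_Nil_conv prod_list.append set_append)

section \<open>The semiring \<open>E(S\<^sub>r)\<close>\<close>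

context reduced_fraction
begin

definition ESr :: "real set" where "ESr = add_submonoid_gen (exp ` Sr)"

definition exp_repr :: "real multiset \<Rightarrow> real \<Rightarrow> bool" where
  "exp_repr M x \<longleftrightarrow> set_mset M \<subseteq> Sr \<and> x = exp_sum M"

lemma exp_sum_in_ESr: "set_mset M \<subseteq> Sr \<Longrightarrow> exp_sum M \<in> ESr"
  unfolding ESr_def
  by (induction M) (auto intro: add_submonoid_gen.zero add_submonoid_gen.gen add_submonoid_gen.add)

lemma ESr_exp_repr: "x \<in> ESr \<Longrightarrow> \<exists>M. exp_repr M x"
  unfolding ESr_def exp_repr_def
proof (induction rule: add_submonoid_gen.induct)
  case (gen x)
  then obtain s where "s \<in> Sr" "x = exp s" by auto
  then show ?case by (intro exI[of _ "{#s#}"]) simp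
next
  case (add x y)
  then obtain M1 M2 where "set_mset M1 \<subseteq> Sr" "x = exp_sum M1" "set_mset M2 \<subseteq> Sr" "y = exp_sum M2"
    by blast
  then show ?case by (intro exI[of _ "M1 + M2"]) auto
qed (auto intro: exI[of _ "{#}"])

lemma Sr_finite_subset_grid:
  assumes "finite A" "A \<subseteq> Sr"
  obtains N m where "N > 0" "A \<subseteq> (\<lambda>j. real j / real N) ` {..m}"
proof -
  have "\<forall>s\<in>A. \<exists>n. s * real b ^ n \<in> \<int>" using assms(2) Sr_mult_b_power_Ints by blast
  then obtain n where n: "\<And>s. s \<in> A \<Longrightarrow> s * real b ^ n s \<in> \<int>" by metis
  define N where "N = b ^ Max (insert 0 (n ` A))"
  define m where "m = Max (insert 0 ((\<lambda>s. nat \<lfloor>s * real N\<rfloor>) ` A))"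
  have "N > 0" using b_pos by (simp add: N_def)
  moreover have "s \<in> (\<lambda>j. real j / real N) ` {..m}" if s: "s \<in> A" for s
  proof -
    have "s * real N \<in> \<int>"
      using n[OF s] Ints_mult_b_power_mono assms(1) s unfolding N_def by simp
    then obtain z where z: "s * real N = of_int z" by (auto elim: Ints_cases)
    have "0 \<le> s * real N" using s assms(2) Sr_nonneg by auto
    then have "0 \<le> z" using z by simp
    then have "s = real (nat z) / real N" using z \<open>N > 0\<close> by (simp add: field_simps)
    moreover have "nat \<lfloor>s * real N\<rfloor> \<le> m" unfolding m_def using assms(1) s by (intro Max_ge) auto
    then have "nat z \<le> m" using z by simp
    ultimately show ?thesis by auto
  qed
  ultimately show ?thesis using that by blast
qed

lemma exp_repr_unique:
  assumes "exp_repr M x" "exp_repr M' x"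
  shows "M = M'"
proof -
  have M: "set_mset M \<subseteq> Sr" "set_mset M' \<subseteq> Sr" and eq: "exp_sum M = exp_sum M'"
    using assms by (auto simp: exp_repr_def)
  obtain N m where N: "N > 0" and grid: "set_mset M \<union> set_mset M' \<subseteq> (\<lambda>j. real j / real N) ` {..m}"
    using Sr_finite_subset_grid[of "set_mset M \<union> set_mset M'"] M by auto
  define c where "c j = int (count M (real j / real N)) - int (count M' (real j / real N))" for j
  have "(\<Sum>j\<le>m. of_int (c j) * exp (real j / real N)) = exp_sum M - exp_sum M'"
    using exp_sum_on_grid[OF N, of M m] exp_sum_on_grid[OF N, of M' m] grid
    by (simp add: c_def algebra_simps sum_subtractf)
  then have "\<forall>j\<le>m. c j = 0" using exp_int_combination_eq_0[OF N] eq by simp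
  then have "count M y = count M' y" for y
    using grid by (cases "y \<in> set_mset M \<union> set_mset M'") (auto simp: c_def not_in_iff)
  then show "M = M'" by (rule multiset_eqI)
qed

lemma exp_repr_mult: "exp_repr M1 x \<Longrightarrow> exp_repr M2 y \<Longrightarrow> exp_repr (pair_sums M1 M2) (x * y)"
proof -
  have "set_mset M1 \<subseteq> Sr \<Longrightarrow> set_mset (pair_sums M1 M2) \<subseteq> Sr" if "set_mset M2 \<subseteq> Sr"
    using that by (induction M1) (auto intro: Sr_add)
  then show "exp_repr M1 x \<Longrightarrow> exp_repr M2 y \<Longrightarrow> exp_repr (pair_sums M1 M2) (x * y)"
    by (auto simp: exp_repr_def exp_sum_pair_sums)
qed

lemma exp_repr_singleton: "s \<in> Sr \<Longrightarrow> exp_repr {#s#} (exp s)"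
  by (simp add: exp_repr_def)

lemma exp_repr_size_1: "exp_repr M x \<Longrightarrow> size M = 1 \<Longrightarrow> \<exists>s\<in>Sr. M = {#s#} \<and> x = exp s"
  by (metis exp_repr_def exp_sum_add_mset exp_sum_empty add.right_neutral
      insert_subset set_mset_add_mset_insert size_1_singleton_mset)

lemma ESr_mult: "x \<in> ESr \<Longrightarrow> y \<in> ESr \<Longrightarrow> x * y \<in> ESr"
proof -
  assume "x \<in> ESr" "y \<in> ESr"
  then obtain M1 M2 where "exp_repr M1 x" "exp_repr M2 y" using ESr_exp_repr by blast
  then have "exp_repr (pair_sums M1 M2) (x * y)" by (rule exp_repr_mult)
  then show ?thesis unfolding exp_repr_def using exp_sum_in_ESr by simp
qed

lemma ESr_add: "x \<in> ESr \<Longrightarrow> y \<in> ESr \<Longrightarrow> x + y \<in> ESr"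
  unfolding ESr_def by (rule add_submonoid_gen.add)

lemma exp_in_ESr: "s \<in> Sr \<Longrightarrow> exp s \<in> ESr"
  unfolding ESr_def by (rule add_submonoid_gen.gen) auto

lemma one_in_ESr: "1 \<in> ESr"
  using exp_in_ESr[OF Sr_zero] by simp

lemma ESr_nonneg: "x \<in> ESr \<Longrightarrow> 0 \<le> x"
  using ESr_exp_repr exp_sum_nonneg unfolding exp_repr_def by blast

lemma ESr_ge_1: "x \<in> ESr \<Longrightarrow> x \<noteq> 0 \<Longrightarrow> 1 \<le> x"
proof -
  assume "x \<in> ESr" "x \<noteq> 0"
  then obtain M where M: "set_mset M \<subseteq> Sr" "x = exp_sum M" using ESr_exp_repr exp_repr_def by blast
  then obtain s M' where "M = add_mset s M'" using \<open>x \<noteq> 0\<close> by (cases M) auto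
  then have "1 \<le> exp s" "0 \<le> exp_sum M'" "x = exp s + exp_sum M'"
    using M Sr_nonneg exp_sum_nonneg by auto
  then show ?thesis by linarith
qed

lemma sr_unit_ESr_iff: "sr_unit ESr u \<longleftrightarrow> u = 1"
proof
  assume "sr_unit ESr u"
  then obtain v where "u \<in> ESr" "u \<noteq> 0" "v \<in> ESr" "v \<noteq> 0" and uv: "u * v = 1"
    unfolding sr_unit_def by auto
  then have "1 \<le> u" "1 \<le> v" using ESr_ge_1 by auto
  then have "u \<le> u * v" by (simp add: mult_le_cancel_left1)
  then show "u = 1" using uv \<open>1 \<le> u\<close> by simp
qed (auto simp: sr_unit_def one_in_ESr)

lemma exp_r_power_atom: "sr_atom ESr (exp (r ^ n))"
  unfolding sr_atom_def
proof (intro conjI ballI impI)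
  show "exp (r ^ n) \<in> ESr - {0}" using exp_in_ESr[OF Sr_power] by simp
  show "\<not> sr_unit ESr (exp (r ^ n))" using r_pos by (simp add: sr_unit_ESr_iff)
  fix y z assume y: "y \<in> ESr - {0}" and z: "z \<in> ESr - {0}" and eq: "exp (r ^ n) = y * z"
  obtain My Mz where My: "exp_repr My y" and Mz: "exp_repr Mz z" using ESr_exp_repr y z by blast
  have "exp_repr (pair_sums My Mz) (exp (r ^ n))" using exp_repr_mult[OF My Mz] eq by simp
  then have sums: "pair_sums My Mz = {#r ^ n#}" using exp_repr_unique exp_repr_singleton[OF Sr_power] by blast
  then have "size My = 1" "size Mz = 1" by (metis size_pair_sums size_single nat_mult_eq_1_iff)+
  then obtain v w where v: "v \<in> Sr" "My = {#v#}" "y = exp v" and w: "w \<in> Sr" "Mz = {#w#}" "z = exp w"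
    using exp_repr_size_1 My Mz by blast
  then have "r ^ n = v + w" using sums by simp
  then have "v = 0 \<or> w = 0" using r_power_eq_add_Sr v w by blast
  then show "sr_unit ESr y \<or> sr_unit ESr z" using v w by (auto simp: sr_unit_ESr_iff)
qed

lemma exp_atom_factorizable:
  assumes "s \<in> Sr" "s \<noteq> 0"
  shows "atom_factorizable ESr (exp s)"
proof -
  obtain ks where ks: "s = (\<Sum>k\<leftarrow>ks. r ^ k)" using Sr_eq_sum_list_powers assms(1) by blast
  have "exp (\<Sum>k\<leftarrow>ks. r ^ k) = prod_list (map (\<lambda>k. exp (r ^ k)) ks)"
    by (induction ks) (auto simp: exp_add)
  moreover have "ks \<noteq> []" using ks assms(2) by auto
  ultimately show ?thesis
    unfolding atom_factorizable_def ks using exp_r_power_atom by (intro exI[of _ "map (\<lambda>k. exp (r ^ k)) ks"]) auto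
qed

definition primitive_repr :: "real multiset \<Rightarrow> bool" where
  "primitive_repr M \<longleftrightarrow> (\<forall>v\<in>Sr. (\<forall>s\<in>#M. s - v \<in> Sr) \<longrightarrow> v = 0)"

lemma exists_primitive_repr:
  assumes "exp_repr M x" "M \<noteq> {#}"
  obtains t Mh where "t \<in> Sr" "exp_repr Mh (exp_sum Mh)" "primitive_repr Mh" "size Mh = size M"
    "x = exp t * exp_sum Mh"
proof -
  have M: "set_mset M \<subseteq> Sr" "x = exp_sum M" using assms(1) by (auto simp: exp_repr_def)
  obtain t where t: "t \<in> common_divisors (set_mset M)" and t_max: "\<forall>u\<in>common_divisors (set_mset M). u \<le> t"
    using greatest_common_divisor_exists[of "set_mset M"] M assms(2) by auto
  define Mh where "Mh = image_mset (\<lambda>s. s - t) M"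
  have "primitive_repr Mh"
    unfolding primitive_repr_def
  proof (intro ballI impI)
    fix v assume v: "v \<in> Sr" and "\<forall>s\<in>#Mh. s - v \<in> Sr"
    then have "t + v \<in> common_divisors (set_mset M)"
      using t Sr_add by (auto simp: common_divisors_def Mh_def algebra_simps)
    then show "v = 0" using t_max Sr_nonneg[OF v] by force
  qed
  moreover have "exp_repr Mh (exp_sum Mh)" using t by (auto simp: exp_repr_def Mh_def common_divisors_def)
  moreover have "x = exp t * exp_sum Mh" using exp_sum_unshift M(2) by (simp add: Mh_def)
  ultimately show ?thesis using that t by (auto simp: Mh_def common_divisors_def)
qed

lemma primitive_repr_no_exp_factor:
  assumes "primitive_repr Mh" "exp_repr Mh (exp v * z)" "v \<in> Sr" "z \<in> ESr"
  shows "v = 0"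
proof -
  obtain Mz where Mz: "exp_repr Mz z" using ESr_exp_repr assms(4) by blast
  have "exp_repr (pair_sums {#v#} Mz) (exp v * z)" using exp_repr_mult[OF exp_repr_singleton[OF assms(3)] Mz] .
  then have "Mh = image_mset ((+) v) Mz" using exp_repr_unique assms(2) by fastforce
  then have "\<forall>s\<in>#Mh. s - v \<in> Sr" using Mz by (auto simp: exp_repr_def)
  then show ?thesis using assms(1,3) by (simp add: primitive_repr_def)
qed

text \<open>
  Sizes of representations multiply, and a primitive element has no factor represented by a
  singleton, so a nontrivial factorization of it splits the size into two factors \<open>\<ge> 2\<close>.\<close>
lemma primitive_repr_factor_sizes:
  assumes "primitive_repr Mh" "exp_repr Mh (y * z)" "exp_repr My y" "exp_repr Mz z"
    and "y \<noteq> 0" "z \<noteq> 0" "y \<noteq> 1" "z \<noteq> 1"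
  shows "size My < size Mh" "size Mz < size Mh"
proof -
  have "Mh = pair_sums My Mz" using exp_repr_unique exp_repr_mult assms(2-4) by blast
  then have size_Mh: "size Mh = size My * size Mz" by (simp add: size_pair_sums)
  have "size My \<noteq> 1"
  proof
    assume "size My = 1"
    then obtain v where "v \<in> Sr" "y = exp v" using exp_repr_size_1 assms(3) by blast
    then show False using primitive_repr_no_exp_factor[OF assms(1)] assms(2,4,7) exp_sum_in_ESr
      by (fastforce simp: exp_repr_def)
  qed
  moreover have "size Mz \<noteq> 1"
  proof
    assume "size Mz = 1"
    then obtain v where "v \<in> Sr" "z = exp v" using exp_repr_size_1 assms(4) by blast
    then show False using primitive_repr_no_exp_factor[OF assms(1), of v y] assms(2,3,8) exp_sum_in_ESr
      by (fastforce simp: exp_repr_def mult.commute)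
  qed
  moreover have "size My \<noteq> 0" "size Mz \<noteq> 0" using assms(3-6) by (auto simp: exp_repr_def)
  ultimately have "2 \<le> size My" "2 \<le> size Mz" by linarith+
  then have "size My * 1 < size My * size Mz" "1 * size Mz < size My * size Mz"
    by (intro mult_strict_left_mono mult_strict_right_mono; simp)+
  then show "size My < size Mh" "size Mz < size Mh" unfolding size_Mh by simp_all
qed

lemma ESr_atom_factorizable:
  "exp_repr M x \<Longrightarrow> x \<noteq> 0 \<Longrightarrow> x \<noteq> 1 \<Longrightarrow> atom_factorizable ESr x"
proof (induction "size M" arbitrary: M x rule: less_induct)
  case less
  have "M \<noteq> {#}" using less.prems by (auto simp: exp_repr_def)
  then obtain t Mh where t: "t \<in> Sr" and Mh: "exp_repr Mh (exp_sum Mh)" "primitive_repr Mh"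
    "size Mh = size M" and x: "x = exp t * exp_sum Mh"
    using exists_primitive_repr less.prems(1) by metis
  define h where "h = exp_sum Mh"
  have "h \<in> ESr" "h \<noteq> 0" using Mh(1) x less.prems(2) exp_sum_in_ESr by (auto simp: h_def exp_repr_def)
  have h_factorizable: "atom_factorizable ESr h" if h1: "h \<noteq> 1"
  proof (cases "sr_atom ESr h")
    case False
    then obtain y z where y: "y \<in> ESr" "y \<noteq> 0" "y \<noteq> 1" and z: "z \<in> ESr" "z \<noteq> 0" "z \<noteq> 1"
      and h: "h = y * z"
      using \<open>h \<in> ESr\<close> \<open>h \<noteq> 0\<close> h1 unfolding sr_atom_def sr_unit_ESr_iff by blast
    obtain My Mz where My: "exp_repr My y" and Mz: "exp_repr Mz z" using ESr_exp_repr y z by blast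
    have "size My < size M" "size Mz < size M"
      using primitive_repr_factor_sizes[OF Mh(2) _ My Mz] Mh(1,3) h y z by (auto simp: h_def)
    then show ?thesis using less.hyps My Mz y z h atom_factorizable_mult by blast
  qed (rule atom_factorizable_atom)
  show ?case
  proof (cases "t = 0")
    case True
    then show ?thesis using x less.prems(3) h_factorizable by (simp add: h_def)
  next
    case False
    then have "atom_factorizable ESr (exp t)" using exp_atom_factorizable t by blast
    then show ?thesis using x h_factorizable atom_factorizable_mult by (cases "h = 1") (auto simp: h_def)
  qed
qed

lemma ESr_atomic: "sr_atomic ESr"
  unfolding sr_atomic_def
proof (intro ballI impI)
  fix x assume x: "x \<in> ESr - {0}" and "\<not> sr_unit ESr x"
  then have "x \<noteq> 1" by (simp add: sr_unit_ESr_iff)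
  obtain M where "exp_repr M x" using ESr_exp_repr x by blast
  then have "atom_factorizable ESr x" using ESr_atom_factorizable x \<open>x \<noteq> 1\<close> by blast
  then show "\<exists>as. as \<noteq> [] \<and> (\<forall>a\<in>set as. sr_atom ESr a) \<and> x = prod_list as"
    by (simp add: atom_factorizable_def)
qed

lemma ESr_positive_semiring: "positive_semiring ESr"
proof -
  have "0 \<in> ESr" unfolding ESr_def by (rule add_submonoid_gen.zero)
  then show ?thesis unfolding positive_semiring_def using ESr_nonneg one_in_ESr ESr_add ESr_mult by blast
qed

lemma le_of_mem_sr_principal_ESr:
  assumes "x \<in> sr_principal ESr y" "0 \<le> y" shows "y \<le> x"
proof -
  obtain s where "s \<in> ESr" "s \<noteq> 0" "x = y * s" using assms(1) by (auto simp: sr_principal_def)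
  then show ?thesis using ESr_ge_1 assms(2) by (simp add: mult_le_cancel_left1)
qed

text \<open>
  Since \<open>a r\<^sup>n = a r\<^sup>n\<^sup>+\<^sup>1 + (b - a) r\<^sup>n\<^sup>+\<^sup>1\<close>, the element \<open>exp (a r\<^sup>n\<^sup>+\<^sup>1)\<close> divides
  \<open>exp (a r\<^sup>n)\<close> in \<open>E(S\<^sub>r)\<close>.\<close>
lemma sr_principal_exp_chain:
  "sr_principal ESr (exp (real a * r ^ n)) \<subseteq> sr_principal ESr (exp (real a * r ^ Suc n))"
proof
  fix y assume "y \<in> sr_principal ESr (exp (real a * r ^ n))"
  then obtain s where s: "s \<in> ESr - {0}" "y = exp (real a * r ^ n) * s" by (auto simp: sr_principal_def)
  define d where "d = exp (real (b - a) * r ^ Suc n)"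
  have "d \<in> ESr" unfolding d_def by (intro exp_in_ESr Sr_of_nat_mult Sr_power)
  then have "d * s \<in> ESr - {0}" using s ESr_mult by (auto simp: d_def)
  moreover have "real a * r ^ n = real a * r ^ Suc n + real (b - a) * r ^ Suc n"
    using a_less_b b_pos by (simp add: r_def of_nat_diff field_simps)
  then have "y = exp (real a * r ^ Suc n) * (d * s)" by (simp add: s(2) d_def exp_add)
  ultimately show "y \<in> sr_principal ESr (exp (real a * r ^ Suc n))" by (auto simp: sr_principal_def)
qed

lemma ESr_not_ACCP: "\<not> sr_ACCP ESr"
proof
  define x where "x n = exp (real a * r ^ n)" for n
  assume "sr_ACCP ESr"
  moreover have "x n \<in> ESr - {0}" for n unfolding x_def by (simp add: exp_in_ESr Sr_of_nat_mult Sr_power)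
  moreover have "sr_principal ESr (x n) \<subseteq> sr_principal ESr (x (Suc n))" for n
    unfolding x_def by (rule sr_principal_exp_chain)
  ultimately obtain N where "\<forall>n\<ge>N. sr_principal ESr (x n) = sr_principal ESr (x N)"
    using spec[OF \<open>sr_ACCP ESr\<close>[unfolded sr_ACCP_def], of x] by blast
  then have "sr_principal ESr (x (Suc N)) = sr_principal ESr (x N)" by (metis le_SucI order_refl)
  moreover have "x (Suc N) \<in> sr_principal ESr (x (Suc N))"
    using one_in_ESr by (force simp: sr_principal_def)
  ultimately have "x (Suc N) \<in> sr_principal ESr (x N)" by simp
  then have "x N \<le> x (Suc N)" by (rule le_of_mem_sr_principal_ESr) (simp add: x_def)
  moreover have "r ^ Suc N < r ^ N" using power_strict_decreasing[of N "Suc N" r] r_pos r_less_1 by simp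
  then have "x (Suc N) < x N" using two_le_a by (simp add: x_def)
  ultimately show False by simp
qed

end

theorem mainTheorem3:
  fixes q :: rat
  assumes "0 < q" and "q < 1" and "fst (quotient_of q) \<ge> 2"
  defines "Sr \<equiv> add_submonoid_gen (range (\<lambda>n::nat. (of_rat q :: real) ^ n))"
  shows "positive_semiring (add_submonoid_gen (exp ` Sr))
    \<and> sr_atomic (add_submonoid_gen (exp ` Sr))
    \<and> \<not> sr_ACCP (add_submonoid_gen (exp ` Sr))"
proof -
  note Sr_q = Sr_def \<comment> \<open>the interpretation below shadows \<open>Sr_def\<close>\<close>
  obtain n d where nd: "quotient_of q = (n, d)" by (cases "quotient_of q") auto
  have q: "q = of_int n / of_int d" and "d > 0" "coprime n d"
    using quotient_of_div[OF nd] quotient_of_denom_pos[OF nd] quotient_of_coprime[OF nd] by auto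
  have "n \<ge> 2" using assms(3) nd by simp
  moreover have "n < d" using assms(2) \<open>d > 0\<close> by (simp add: q divide_less_eq)
  ultimately interpret reduced_fraction "nat n" "nat d"
    using \<open>coprime n d\<close> by unfold_locales (auto simp: coprime_int_iff[symmetric])
  have "(of_rat q :: real) = r" using \<open>n \<ge> 2\<close> \<open>d > 0\<close> by (simp add: q r_def of_rat_divide)
  then have "add_submonoid_gen (exp ` Sr) = ESr" by (simp add: Sr_q Sr_def ESr_def)
  then show ?thesis using ESr_positive_semiring ESr_atomic ESr_not_ACCP by simp
qed

end
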